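(* Let $\mathcal{I}$ be an ideal on $\omega$, let $\mathcal{A}=\{A_\alpha:\alpha<\mathfrak{c}\}$ be an almost disjoint family on $\omega$, let $\mathcal{I}^+=\{B_\alpha:\alpha<\mathfrak{c}\}$ be an enumeration, and let $\{P_n:n\in\omega\}$ be a partition of $\omega$ with $P_n\in\mathcal{I}$ for all $n$. Let $\rho^{(\mathcal{I})}$ be the associated function. Then: (1) $\rho^{(\mathcal{I})}$ is partition regular; (2) $\mathcal{I}_{\rho^{(\mathcal{I})}}=\mathcal{I}$; (3) $\rho^{(\mathcal{I})}$ has small accretions; (4) if $\mathcal{I}\in P^-$, then $\rho^{(\mathcal{I})}\in P^-$; (5) $\rho^{(\mathcal{I})}\in(S_2)$.
   Context: An ideal on $\omega$: $\mathcal{I}\subseteq\mathcal{P}(\omega)$ with $\emptyset\in\mathcal{I}$, $\omega\notin\mathcal{I}$, closed under finite unions and subsets, containing all finite sets; $\mathcal{I}^+=\mathcal{P}(\omega)\setminus\mathcal{I}$. An almost disjoint family on $\omega$ is a family of infinite subsets of $\omega$ any two distinct members of which have finite intersection (here the $A_\alpha$ are pairwise distinct). Definition of $\rho^{(\mathcal{I})}$: let $\overline{\mathcal{A}}=\{A\setminus K:A\in\mathcal{A},K\in[\omega]^{<\omega}\}$ and define $\rho^{(\mathcal{I})}\colon\overline{\mathcal{A}}\to[\omega]^\omega$ by $\rho^{(\mathcal{I})}(A_\alpha\setminus K)=B_\alpha\setminus\bigcup\{P_n:n<\max(K\cap A_\alpha)\}$, with the convention $\max\emptyset=0$. Partition regular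 function: $\Lambda,\Omega$ countably infinite, $\mathcal{F}$ a nonempty family of infinite subsets of $\Omega$ with $F\setminus K\in\mathcal{F}$ for $F\in\mathcal{F}$, $K$ finite; $\rho\colon\mathcal{F}\to[\Lambda]^\omega$ is partition regular if (M) $E\subseteq F\Rightarrow\rho(E)\subseteq\rho(F)$; (R) if $F\in\mathcal{F}$ and $\rho(F)=A\cup B$ then some $E\in\mathcal{F}$ has $\rho(E)\subseteq A$ or $\rho(E)\subseteq B$; (S) for every $E\in\mathcal{F}$ there is $F\in\mathcal{F}$, $F\subseteq E$, such that every $a\in\rho(F)$ satisfies $a\notin\rho(F\setminus K)$ for some finite $K\subseteq\Omega$. $\mathcal{I}_\rho=\{A\subseteq\Lambda:\forall F\in\mathcal{F}\ \rho(F)\not\subseteq A\}$. $\rho$ has small accretions if for every $E\in\mathcal{F}$ there is $F\in\mathcal{F}$, $F\subseteq E$, with $\rho(F)\setminus\rho(F\setminus K)\in\mathcal{I}_\rho$ for every finite $K\subseteq\Omega$. $\rho\in P^-$: for every decreasing $A_0\supseteq A_1\supseteq\dots$ of subsets of $\Lambda$ with $A_0\notin\mathcal{I}_\rho$ and $A_n\setminus A_{n+1}\in\mathcal{I}_\rho$, there is $F\in\mathcal{F}$ with $\rho(F)\subseteq A_0$ such that for each $n$ some finite $K\subseteq\Omega$ has $\rho(F\setminus K)\subseteq A_n$. For an ideal $\mathcal{I}$, $\mathcal{I}\in P^-$ means $\rho_{\mathcal{I}}\in P^-$, where $\rho_{\mathcal{I}}\colon\mathcal{I}^+\to[\omega]^\omega$,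 $\rho_{\mathcal{I}}(A)=A$; equivalently, for every decreasing $A_0\supseteq A_1\supseteq\dots$ with $A_0\in\mathcal{I}^+$ and $A_n\setminus A_{n+1}\in\mathcal{I}$ there is $B\in\mathcal{I}^+$, $B\subseteq A_0$, with $B\setminus A_n$ finite for all $n$. $\rho\in(S_2)$: for every $E\in\mathcal{F}$ there is $F\in\mathcal{F}$, $F\subseteq E$, such that for every $B\subseteq\rho(F)$ with $B\notin\mathcal{I}_\rho$ there is $G\in\mathcal{F}$ with $\rho(G)\subseteq B$ and for every finite $K\subseteq\Omega$ there is a finite $L\subseteq\Omega$ with $\rho(G\setminus L)\subseteq\rho(F\setminus K)$. *)

theory Defs
  imports Main
begin

definition is_ideal :: "nat set set \<Rightarrow> bool" where
  "is_ideal I \<longleftrightarrow> {} \<in> I \<and> UNIV \<notin> I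
     \<and> (\<forall>X\<in>I. \<forall>Y\<in>I. X \<union> Y \<in> I)
     \<and> (\<forall>X\<in>I. \<forall>Y. Y \<subseteq> X \<longrightarrow> Y \<in> I)
     \<and> (\<forall>X. finite X \<longrightarrow> X \<in> I)"

definition almost_disjoint_family :: "('k \<Rightarrow> nat set) \<Rightarrow> bool" where
  "almost_disjoint_family A \<longleftrightarrow> inj A \<and> (\<forall>a. infinite (A a))
     \<and> (\<forall>a b. a \<noteq> b \<longrightarrow> finite (A a \<inter> A b))"

definition is_partition_seq :: "(nat \<Rightarrow> nat set) \<Rightarrow> bool" where
  "is_partition_seq P \<longleftrightarrow> (\<forall>n. P n \<noteq> {}) \<and> (\<forall>m n. m \<noteq> n \<longrightarrow> P m \<inter> P n = {})
     \<and> (\<Union>n. P n) = UNIV"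

definition maxz :: "nat set \<Rightarrow> nat" where
  "maxz K = (if K = {} then 0 else Max K)"

definition Abar :: "('k \<Rightarrow> nat set) \<Rightarrow> nat set set" where
  "Abar A = {A a - K | a K. finite K}"

definition rhoI :: "('k \<Rightarrow> nat set) \<Rightarrow> ('k \<Rightarrow> nat set) \<Rightarrow> (nat \<Rightarrow> nat set) \<Rightarrow> nat set \<Rightarrow> nat set" where
  "rhoI A B P F = (SOME Y. \<exists>a K. finite K \<and> F = A a - K \<and>
      Y = B a - \<Union>{P n | n. n < maxz (K \<inter> A a)})"

definition partition_regular :: "'o set set \<Rightarrow> ('o set \<Rightarrow> 'l set) \<Rightarrow> bool" where
  "partition_regular Fam rho \<longleftrightarrow>
     Fam \<noteq> {} \<and> (\<forall>F\<in>Fam. infinite F) \<and> (\<forall>F\<in>Fam. \<forall>K. finite K \<longrightarrow> F - K \<in> Fam)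
     \<and> (\<forall>F\<in>Fam. infinite (rho F))
     \<and> (\<forall>E\<in>Fam. \<forall>F\<in>Fam. E \<subseteq> F \<longrightarrow> rho E \<subseteq> rho F)
     \<and> (\<forall>F\<in>Fam. \<forall>X Y. rho F = X \<union> Y \<longrightarrow> (\<exists>E\<in>Fam. rho E \<subseteq> X \<or> rho E \<subseteq> Y))
     \<and> (\<forall>E\<in>Fam. \<exists>F\<in>Fam. F \<subseteq> E \<and>
          (\<forall>x\<in>rho F. \<exists>K. finite K \<and> x \<notin> rho (F - K)))"

definition I_rho :: "'o set set \<Rightarrow> ('o set \<Rightarrow> 'l set) \<Rightarrow> 'l set set" where
  "I_rho Fam rho = {X. \<forall>F\<in>Fam. \<not> rho F \<subseteq> X}"

definition small_accretions :: "'o set set \<Rightarrow> ('o set \<Rightarrow> 'l set) \<Rightarrow> bool" where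
  "small_accretions Fam rho \<longleftrightarrow> (\<forall>E\<in>Fam. \<exists>F\<in>Fam. F \<subseteq> E \<and>
      (\<forall>K. finite K \<longrightarrow> rho F - rho (F - K) \<in> I_rho Fam rho))"

definition P_minus :: "'o set set \<Rightarrow> ('o set \<Rightarrow> 'l set) \<Rightarrow> bool" where
  "P_minus Fam rho \<longleftrightarrow> (\<forall>X :: nat \<Rightarrow> 'l set.
      (\<forall>n. X (Suc n) \<subseteq> X n) \<and> X 0 \<notin> I_rho Fam rho
      \<and> (\<forall>n. X n - X (Suc n) \<in> I_rho Fam rho)
      \<longrightarrow> (\<exists>F\<in>Fam. rho F \<subseteq> X 0 \<and> (\<forall>n. \<exists>K. finite K \<and> rho (F - K) \<subseteq> X n)))"

text \<open>An ideal I is in P^- iff rho_I : I^+ \<rightarrow> [omega]^omega, rho_I(A) = A, is in P^-.\<close>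
definition ideal_P_minus :: "nat set set \<Rightarrow> bool" where
  "ideal_P_minus I \<longleftrightarrow> P_minus (UNIV - I) (\<lambda>X. X)"

definition S2 :: "'o set set \<Rightarrow> ('o set \<Rightarrow> 'l set) \<Rightarrow> bool" where
  "S2 Fam rho \<longleftrightarrow> (\<forall>E\<in>Fam. \<exists>F\<in>Fam. F \<subseteq> E \<and>
      (\<forall>Y. Y \<subseteq> rho F \<and> Y \<notin> I_rho Fam rho \<longrightarrow>
         (\<exists>G\<in>Fam. rho G \<subseteq> Y \<and>
            (\<forall>K. finite K \<longrightarrow> (\<exists>L. finite L \<and> rho (G - L) \<subseteq> rho (F - K))))))"

end

theory Submission
  imports Defs "HOL-Library.Infinite_Set"
begin

text \<open>Almost disjointness makes A a - K determine both a and K \<inter> A a, so that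
  rho (A a - K) = B a - \<Union>{P n | n. n < max (K \<inter> A a)}: every value is B a minus a set of I,
  and rho (A a) = B a runs through all I-positive sets. Hence I_rho = I, and any positive set Y
  is reached as the value at the argument A c with B c = Y, which gives (R), P-minus and (S2).
  Removing finitely many points from an argument removes only a set of I from the value (small
  accretions), while removing one point of A a beyond m removes all of \<Union>{P n | n. n < m};
  this gives (S) and the tail conditions in P-minus and (S2).\<close>

lemma ideal_subset: "is_ideal I \<Longrightarrow> X \<in> I \<Longrightarrow> Y \<subseteq> X \<Longrightarrow> Y \<in> I"
  unfolding is_ideal_def by blast

lemma ideal_Un: "is_ideal I \<Longrightarrow> X \<in> I \<Longrightarrow> Y \<in> I \<Longrightarrow> X \<union> Y \<in> I"
  unfolding is_ideal_def by blast

lemma ideal_finite: "is_ideal I \<Longrightarrow> finite X \<Longrightarrow> X \<in> I"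
  unfolding is_ideal_def by blast

lemma ideal_Diff_notin:
  assumes "is_ideal I" "X \<notin> I" "Y \<in> I"
  shows "X - Y \<notin> I"
proof
  assume "X - Y \<in> I"
  then have "(X - Y) \<union> Y \<in> I" using assms ideal_Un by blast
  then show False using assms ideal_subset by blast
qed

lemma I_rho_identity: "is_ideal I \<Longrightarrow> I_rho (UNIV - I) (\<lambda>X. X) = I"
  unfolding I_rho_def using ideal_subset by blast

definition union_below :: "(nat \<Rightarrow> nat set) \<Rightarrow> nat \<Rightarrow> nat set" where
  "union_below P m = \<Union>{P n | n. n < m}"

lemma union_below_mono: "m \<le> m' \<Longrightarrow> union_below P m \<subseteq> union_below P m'"
  unfolding union_below_def by (blast intro: less_le_trans)

lemma mem_union_below: "x \<in> P j \<Longrightarrow> j < m \<Longrightarrow> x \<in> union_below P m"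
  unfolding union_below_def by blast

lemma union_below_in_ideal:
  assumes "is_ideal I" "\<forall>n. P n \<in> I"
  shows "union_below P m \<in> I"
proof (induction m)
  case 0
  show ?case using ideal_finite[OF assms(1)] by (simp add: union_below_def)
next
  case (Suc m)
  have "union_below P (Suc m) = union_below P m \<union> P m"
    by (auto simp: union_below_def less_Suc_eq)
  then show ?case using Suc assms ideal_Un by metis
qed

lemma finite_subset_union_below:
  assumes cover: "(\<Union>n. P n) = UNIV" and "finite K"
  shows "\<exists>m. K \<subseteq> union_below P m"
proof -
  obtain j where j: "\<And>x. x \<in> P (j x)" using cover by (metis UNIV_I UN_E)
  obtain m where "\<forall>i\<in>j ` K. i < m"
    using \<open>finite K\<close> finite_nat_set_iff_bounded by blast
  then have "K \<subseteq> union_below P m" using j mem_union_below by blast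
  then show ?thesis ..
qed

lemma almost_disjoint_family_index_eq:
  assumes adf: "almost_disjoint_family A" and "finite K" and sub: "A a - K \<subseteq> A b"
  shows "a = b"
proof (rule ccontr)
  assume "a \<noteq> b"
  have "A a - K \<subseteq> A a \<inter> A b" using sub by blast
  moreover have "finite (A a \<inter> A b)" using adf \<open>a \<noteq> b\<close> unfolding almost_disjoint_family_def by blast
  ultimately have "finite (A a - K)" by (rule finite_subset)
  then show False using adf \<open>finite K\<close> unfolding almost_disjoint_family_def by simp
qed

lemma almost_disjoint_family_unbounded:
  "almost_disjoint_family A \<Longrightarrow> \<exists>k\<in>A a. m \<le> k"
  unfolding almost_disjoint_family_def infinite_nat_iff_unbounded_le by blast

lemma maxz_mono: "finite K' \<Longrightarrow> K \<subseteq> K' \<Longrightarrow> maxz K \<le> maxz K'"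
  unfolding maxz_def by (auto intro: Max_mono)

lemma le_maxz: "finite K \<Longrightarrow> k \<in> K \<Longrightarrow> k \<le> maxz K"
  unfolding maxz_def by auto

lemma Abar_iff: "F \<in> Abar A \<longleftrightarrow> (\<exists>a K. finite K \<and> F = A a - K)"
  by (auto simp: Abar_def)

lemma Abar_Diff: "finite K \<Longrightarrow> A a - K \<in> Abar A"
  by (auto simp: Abar_iff)

lemma A_in_Abar: "A a \<in> Abar A"
  using Abar_Diff[of "{}"] by simp

lemma Abar_Diff_finite:
  assumes "F \<in> Abar A" "finite K"
  shows "F - K \<in> Abar A"
proof -
  obtain a K0 where "finite K0" "F = A a - K0" using assms(1) by (auto simp: Abar_iff)
  then have "F - K = A a - (K0 \<union> K)" "finite (K0 \<union> K)" using assms(2) by auto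
  then show ?thesis using Abar_Diff by metis
qed

lemma Abar_infinite: "almost_disjoint_family A \<Longrightarrow> F \<in> Abar A \<Longrightarrow> infinite F"
  by (auto simp: Abar_iff almost_disjoint_family_def)

locale rhoI_setting =
  fixes I :: "nat set set" and A B :: "'k \<Rightarrow> nat set" and P :: "nat \<Rightarrow> nat set"
  assumes ideal: "is_ideal I"
    and adf: "almost_disjoint_family A"
    and range_B: "range B = UNIV - I"
    and cover: "(\<Union>n. P n) = UNIV"
    and P_in_ideal: "\<forall>n. P n \<in> I"
begin

abbreviation \<rho> :: "nat set \<Rightarrow> nat set" where "\<rho> \<equiv> rhoI A B P"

lemma B_notin_ideal: "B a \<notin> I"
  using rangeI[of B a, unfolded range_B] by simp

lemma B_surjE:
  assumes "X \<notin> I"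
  obtains c where "B c = X"
proof -
  have "X \<in> range B" unfolding range_B using assms by simp
  then show thesis using that by blast
qed

lemma rhoI_eq:
  assumes "finite K"
  shows "\<rho> (A a - K) = B a - union_below P (maxz (K \<inter> A a))"
  unfolding rhoI_def union_below_def[symmetric]
proof (rule some_equality)
  fix Y
  assume "\<exists>a' K'. finite K' \<and> A a - K = A a' - K' \<and> Y = B a' - union_below P (maxz (K' \<inter> A a'))"
  then obtain a' K' where eq: "A a - K = A a' - K'"
    and Y: "Y = B a' - union_below P (maxz (K' \<inter> A a'))" by blast
  have "A a - K \<subseteq> A a'" using eq by blast
  then have "a = a'" by (rule almost_disjoint_family_index_eq[OF adf assms])
  with eq have "A a - K = A a - K'" by simp
  then have "K' \<inter> A a = K \<inter> A a" by blast
  with Y \<open>a = a'\<close> show "Y = B a - union_below P (maxz (K \<inter> A a))" by simp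
qed (use assms in \<open>intro exI[of _ a] exI[of _ K] conjI refl\<close>)

lemma rhoI_A: "\<rho> (A c) = B c"
  using rhoI_eq[of "{}" c] by (simp add: maxz_def union_below_def)

lemma rhoI_notin_ideal:
  assumes "F \<in> Abar A"
  shows "\<rho> F \<notin> I"
proof -
  obtain a K where "finite K" "F = A a - K" using assms by (auto simp: Abar_iff)
  then have "\<rho> F = B a - union_below P (maxz (K \<inter> A a))" by (simp add: rhoI_eq)
  then show ?thesis
    using ideal_Diff_notin[OF ideal B_notin_ideal union_below_in_ideal[OF ideal P_in_ideal]] by simp
qed

lemma rhoI_Diff:
  assumes "F \<in> Abar A" "finite K"
  obtains m where "\<rho> (F - K) = \<rho> F - union_below P m"
proof -
  obtain a K0 where K0: "finite K0" and F: "F = A a - K0" using assms(1) by (auto simp: Abar_iff)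
  let ?k = "maxz (K0 \<inter> A a)"
  let ?l = "maxz ((K0 \<union> K) \<inter> A a)"
  have \<rho>F: "\<rho> F = B a - union_below P ?k" using rhoI_eq K0 F by simp
  have "F - K = A a - (K0 \<union> K)" using F by blast
  then have \<rho>FK: "\<rho> (F - K) = B a - union_below P ?l" using rhoI_eq K0 assms(2) by simp
  have "?k \<le> ?l" using K0 assms(2) by (intro maxz_mono) auto
  then have "union_below P ?k \<subseteq> union_below P ?l" by (rule union_below_mono)
  then have "\<rho> (F - K) = \<rho> F - union_below P ?l" unfolding \<rho>F \<rho>FK by blast
  then show thesis ..
qed

lemma rhoI_mono:
  assumes "E \<in> Abar A" "F \<in> Abar A" "E \<subseteq> F"
  shows "\<rho> E \<subseteq> \<rho> F"
proof -
  obtain a K b K' where K: "finite K" "E = A a - K" and K': "finite K'" "F = A b - K'"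
    using assms(1,2) by (auto simp: Abar_iff)
  have "a = b" using almost_disjoint_family_index_eq[OF adf K(1)] assms(3) K(2) K'(2) by blast
  with assms(3) K K' have "K' \<inter> A a \<subseteq> K \<inter> A a" by blast
  then have "maxz (K' \<inter> A a) \<le> maxz (K \<inter> A a)" using K(1) by (intro maxz_mono) auto
  then have "union_below P (maxz (K' \<inter> A a)) \<subseteq> union_below P (maxz (K \<inter> A a))"
    by (rule union_below_mono)
  then show ?thesis using rhoI_eq[OF K(1), of a] rhoI_eq[OF K'(1), of b] K(2) K'(2) \<open>a = b\<close> by auto
qed

lemma rhoI_Diff_subset: "F \<in> Abar A \<Longrightarrow> finite K \<Longrightarrow> \<rho> (F - K) \<subseteq> \<rho> F"
  using rhoI_mono Abar_Diff_finite by blast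

lemma rhoI_Diff_disjoint:
  assumes "F \<in> Abar A"
  obtains L where "finite L" "\<rho> (F - L) \<inter> union_below P m = {}"
proof -
  obtain a K0 where K0: "finite K0" and F: "F = A a - K0" using assms by (auto simp: Abar_iff)
  obtain k where k: "k \<in> A a" "m \<le> k" using almost_disjoint_family_unbounded[OF adf] by blast
  let ?l = "maxz ((K0 \<union> {k}) \<inter> A a)"
  have "F - {k} = A a - (K0 \<union> {k})" using F by blast
  then have \<rho>Fk: "\<rho> (F - {k}) = B a - union_below P ?l" using rhoI_eq K0 by simp
  have "m \<le> ?l" using k K0 le_maxz[of "(K0 \<union> {k}) \<inter> A a" k] by simp
  then have "union_below P m \<subseteq> union_below P ?l" by (rule union_below_mono)
  then have "\<rho> (F - {k}) \<inter> union_below P m = {}" unfolding \<rho>Fk by blast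
  then show thesis using that[of "{k}"] by simp
qed

lemma I_rho_rhoI: "I_rho (Abar A) \<rho> = I"
proof (intro set_eqI iffI)
  fix X assume X: "X \<in> I_rho (Abar A) \<rho>"
  show "X \<in> I"
  proof (rule ccontr)
    assume "X \<notin> I"
    then obtain c where "B c = X" by (rule B_surjE)
    then show False using X rhoI_A[of c] A_in_Abar[of A c] by (auto simp: I_rho_def)
  qed
next
  fix X assume "X \<in> I"
  then show "X \<in> I_rho (Abar A) \<rho>"
    using rhoI_notin_ideal ideal_subset[OF ideal] by (auto simp: I_rho_def)
qed

lemma partition_regular_rhoI: "partition_regular (Abar A) \<rho>"
  unfolding partition_regular_def
proof (intro conjI ballI allI impI)
  show "Abar A \<noteq> {}" using A_in_Abar[of A] by blast
  fix F assume F: "F \<in> Abar A"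
  show "infinite F" using Abar_infinite[OF adf F] .
  show "infinite (\<rho> F)" using rhoI_notin_ideal[OF F] ideal_finite[OF ideal] by blast
  show "F - K \<in> Abar A" if "finite K" for K using Abar_Diff_finite[OF F that] .
  show "\<rho> E \<subseteq> \<rho> F" if "E \<in> Abar A" "E \<subseteq> F" for E using rhoI_mono that F by blast
  show "\<exists>E\<in>Abar A. \<rho> E \<subseteq> X \<or> \<rho> E \<subseteq> Y" if "\<rho> F = X \<union> Y" for X Y
  proof -
    have "X \<notin> I \<or> Y \<notin> I" using rhoI_notin_ideal[OF F] ideal_Un[OF ideal] that by metis
    then obtain c where "B c = X \<or> B c = Y" using B_surjE by metis
    then show ?thesis using rhoI_A[of c] A_in_Abar[of A c] by auto
  qed
  have "\<exists>K. finite K \<and> x \<notin> \<rho> (F - K)" for x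
  proof -
    obtain j where "x \<in> P j" using cover by blast
    then have "x \<in> union_below P (Suc j)" by (rule mem_union_below) simp
    moreover obtain L where "finite L" "\<rho> (F - L) \<inter> union_below P (Suc j) = {}"
      using rhoI_Diff_disjoint[OF F] .
    ultimately show ?thesis by blast
  qed
  then show "\<exists>G\<in>Abar A. G \<subseteq> F \<and> (\<forall>x\<in>\<rho> G. \<exists>K. finite K \<and> x \<notin> \<rho> (G - K))"
    using F by blast
qed

lemma small_accretions_rhoI: "small_accretions (Abar A) \<rho>"
  unfolding small_accretions_def I_rho_rhoI
proof
  fix F assume F: "F \<in> Abar A"
  have "\<rho> F - \<rho> (F - K) \<in> I" if K: "finite K" for K
  proof -
    obtain m where "\<rho> (F - K) = \<rho> F - union_below P m" using rhoI_Diff[OF F K] .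
    then have "\<rho> F - \<rho> (F - K) \<subseteq> union_below P m" by blast
    then show ?thesis using ideal_subset[OF ideal union_below_in_ideal[OF ideal P_in_ideal]] by blast
  qed
  then show "\<exists>G\<in>Abar A. G \<subseteq> F \<and> (\<forall>K. finite K \<longrightarrow> \<rho> G - \<rho> (G - K) \<in> I)"
    using F by blast
qed

lemma P_minus_rhoI:
  assumes "ideal_P_minus I"
  shows "P_minus (Abar A) \<rho>"
  unfolding P_minus_def I_rho_rhoI
proof (intro allI impI)
  fix X :: "nat \<Rightarrow> nat set"
  assume X: "(\<forall>n. X (Suc n) \<subseteq> X n) \<and> X 0 \<notin> I \<and> (\<forall>n. X n - X (Suc n) \<in> I)"
  obtain Y where Y: "Y \<notin> I" "Y \<subseteq> X 0" and tail: "\<forall>n. \<exists>K. finite K \<and> Y - K \<subseteq> X n"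
    using assms[unfolded ideal_P_minus_def P_minus_def I_rho_identity[OF ideal], rule_format, OF X]
    by blast
  obtain c where c: "B c = Y" using Y(1) by (rule B_surjE)
  have "\<exists>L. finite L \<and> \<rho> (A c - L) \<subseteq> X n" for n
  proof -
    obtain K where K: "finite K" "Y - K \<subseteq> X n" using tail by blast
    obtain m where "K \<subseteq> union_below P m" using finite_subset_union_below[OF cover K(1)] by blast
    moreover obtain L where L: "finite L" "\<rho> (A c - L) \<inter> union_below P m = {}"
      using rhoI_Diff_disjoint[OF A_in_Abar] .
    moreover have "\<rho> (A c - L) \<subseteq> Y"
      using rhoI_Diff_subset[OF A_in_Abar L(1), of c] rhoI_A c by simp
    ultimately show ?thesis using K(2) by blast
  qed
  moreover have "\<rho> (A c) \<subseteq> X 0" using rhoI_A c Y(2) by simp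
  ultimately show "\<exists>F\<in>Abar A. \<rho> F \<subseteq> X 0 \<and> (\<forall>n. \<exists>K. finite K \<and> \<rho> (F - K) \<subseteq> X n)"
    using A_in_Abar[of A c] by blast
qed

lemma S2_rhoI: "S2 (Abar A) \<rho>"
  unfolding S2_def I_rho_rhoI
proof
  fix F assume F: "F \<in> Abar A"
  have "\<exists>G\<in>Abar A. \<rho> G \<subseteq> Y \<and> (\<forall>K. finite K \<longrightarrow> (\<exists>L. finite L \<and> \<rho> (G - L) \<subseteq> \<rho> (F - K)))"
    if Y: "Y \<subseteq> \<rho> F" "Y \<notin> I" for Y
  proof -
    obtain c where c: "B c = Y" using Y(2) by (rule B_surjE)
    have "\<exists>L. finite L \<and> \<rho> (A c - L) \<subseteq> \<rho> (F - K)" if K: "finite K" for K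
    proof -
      obtain m where m: "\<rho> (F - K) = \<rho> F - union_below P m" using rhoI_Diff[OF F K] .
      obtain L where L: "finite L" "\<rho> (A c - L) \<inter> union_below P m = {}"
        using rhoI_Diff_disjoint[OF A_in_Abar] .
      have "\<rho> (A c - L) \<subseteq> \<rho> F"
        using rhoI_Diff_subset[OF A_in_Abar L(1), of c] rhoI_A c Y(1) by simp
      then show ?thesis using L m by blast
    qed
    moreover have "\<rho> (A c) \<subseteq> Y" using rhoI_A c by simp
    ultimately show ?thesis using A_in_Abar[of A c] by blast
  qed
  then show "\<exists>G\<in>Abar A. G \<subseteq> F \<and> (\<forall>Y. Y \<subseteq> \<rho> G \<and> Y \<notin> I \<longrightarrow>
      (\<exists>H\<in>Abar A. \<rho> H \<subseteq> Y \<and> (\<forall>K. finite K \<longrightarrow> (\<exists>L. finite L \<and> \<rho> (H - L) \<subseteq> \<rho> (G - K)))))"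
    using F by blast
qed

end

theorem proposition5p2:
  fixes I :: "nat set set" and A B :: "'k \<Rightarrow> nat set" and P :: "nat \<Rightarrow> nat set"
  assumes "is_ideal I"
    and "almost_disjoint_family A"
    and "bij_betw B UNIV (UNIV - I)"
    and "is_partition_seq P"
    and "\<forall>n. P n \<in> I"
  shows "partition_regular (Abar A) (rhoI A B P)
    \<and> I_rho (Abar A) (rhoI A B P) = I
    \<and> small_accretions (Abar A) (rhoI A B P)
    \<and> (ideal_P_minus I \<longrightarrow> P_minus (Abar A) (rhoI A B P))
    \<and> S2 (Abar A) (rhoI A B P)"
proof -
  interpret rhoI_setting I A B P
  proof
    show "range B = UNIV - I" using assms(3) by (rule bij_betw_imp_surj_on)
    show "(\<Union>n. P n) = UNIV" using assms(4) by (simp add: is_partition_seq_def)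
  qed (use assms in auto)
  show ?thesis
    using partition_regular_rhoI I_rho_rhoI small_accretions_rhoI P_minus_rhoI S2_rhoI by blast
qed

end
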